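(* Let $\varepsilon>0$ and let $f,g:(0,\infty)\to\mathbb R$ be positive functions such that $g$ is non-decreasing and $\lim_{t\to0^+}f(t)=0$. Then there exists a family of sets $S(\rho)\subset\mathbb R$, $\rho\in(0,\infty)$, such that (1) $S(\tau)\subset S(\rho)$ for all $0<\tau\le\rho$; (2) for every $\rho\in(0,\infty)$ there exist $P,Q\in\mathbb R$ with $S(\rho)\subset B(P,g(\rho))\cup B(Q,g(\rho))$; (3) if $A\subset\mathbb R$ is such that for all $0<\rho\le\varepsilon$ and all $P\in S(\rho)$ there exists $Q\in A$ with $|Q-P|\le f(\rho)$, then $A$ is infinite.
   Context: $B(P,t)=\{x\in\mathbb R:|x-P|<t\}$ denotes the open interval of radius $t$ about $P$. *)

theory Defs
  imports "HOL-Analysis.Analysis"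
begin

end

theory Submission
  imports Defs
begin

text \<open>Choose points \<open>x 0 > x 1 > \<dots> > 0\<close> with \<open>x (n+1) \<le> x n / 2\<close> and scales
  \<open>\<tau> n \<in> (0,\<epsilon>]\<close> with \<open>f (\<tau> n) < x n / 4\<close> and \<open>x (n+1) < g (\<tau> n)\<close>, and let \<open>S \<rho>\<close>
  consist of \<open>0\<close> and the \<open>x j\<close> with \<open>\<tau> j \<le> \<rho>\<close>. If \<open>J\<close> is the least such \<open>j\<close>, balls of
  radius \<open>g \<rho>\<close> around \<open>0\<close> and \<open>x J\<close> cover \<open>S \<rho>\<close>, since all later points lie in
  \<open>[0, x (J+1)]\<close> and \<open>x (J+1) < g (\<tau> J) \<le> g \<rho>\<close>. On the other hand a set \<open>A\<close> that
  approximates every \<open>S (\<tau> j)\<close> to precision \<open>f (\<tau> j)\<close> contains a point within \<open>x j / 4\<close>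
  of each \<open>x j\<close>, and these points are pairwise distinct because the \<open>x j\<close> decay
  geometrically.\<close>

lemma tendsto_zero_at_right_small_value:
  fixes f :: "real \<Rightarrow> real"
  assumes "(f \<longlongrightarrow> 0) (at_right 0)" and "\<epsilon> > 0" and "c > 0"
  shows "\<exists>t. 0 < t \<and> t \<le> \<epsilon> \<and> f t < c"
proof -
  have "\<forall>\<^sub>F t in at_right 0. f t < c"
    using order_tendstoD(2)[OF assms(1)] assms(3) by simp
  then obtain b where "b > 0" and b: "\<And>t. 0 < t \<Longrightarrow> t < b \<Longrightarrow> f t < c"
    unfolding eventually_at_right_field by auto
  then show ?thesis
    using assms(2) by (intro exI[of _ "min (b/2) \<epsilon>"]) auto
qed

lemma halving_seq_decseq:
  fixes x :: "nat \<Rightarrow> real"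
  assumes pos: "\<And>n. 0 < x n" and halving: "\<And>n. x (Suc n) \<le> x n / 2"
  shows "decseq x"
proof (rule decseq_SucI)
  show "x (Suc n) \<le> x n" for n
    using pos[of n] halving[of n] by linarith
qed

lemma halving_seq_le:
  fixes x :: "nat \<Rightarrow> real"
  assumes pos: "\<And>n. 0 < x n" and halving: "\<And>n. x (Suc n) \<le> x n / 2" and "m < n"
  shows "x n \<le> x m / 2"
proof -
  have "x n \<le> x (Suc m)"
    using halving_seq_decseq[of x, OF pos halving] \<open>m < n\<close> by (simp add: decseq_def Suc_le_eq)
  then show ?thesis
    using halving[of m] by linarith
qed

lemma scales_and_halving_points_exist:
  fixes f g :: "real \<Rightarrow> real"
  assumes "\<epsilon> > 0" and "(f \<longlongrightarrow> 0) (at_right 0)" and g_pos: "\<And>t. t > 0 \<Longrightarrow> g t > 0"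
  obtains x \<tau> :: "nat \<Rightarrow> real"
  where "\<And>n. 0 < x n" and "\<And>n. x (Suc n) \<le> x n / 2"
    and "\<And>n. 0 < \<tau> n" and "\<And>n. \<tau> n \<le> \<epsilon>" and "\<And>n. f (\<tau> n) < x n / 4"
    and "\<And>n. x (Suc n) < g (\<tau> n)"
proof -
  have "\<exists>t. 0 < t \<and> t \<le> \<epsilon> \<and> f t < y / 4" if "y > 0" for y
    using tendsto_zero_at_right_small_value[OF assms(2,1), of "y / 4"] that by simp
  then obtain T where T: "\<And>y. y > 0 \<Longrightarrow> 0 < T y \<and> T y \<le> \<epsilon> \<and> f (T y) < y / 4"
    by metis
  define x where "x = rec_nat (1::real) (\<lambda>_ y. min (g (T y) / 2) (y / 2))"
  have x_Suc: "x (Suc n) = min (g (T (x n)) / 2) (x n / 2)" for n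
    by (simp add: x_def)
  have x_pos: "x n > 0" for n
  proof (induction n)
    case 0
    then show ?case by (simp add: x_def)
  next
    case (Suc n)
    then show ?case using g_pos T[OF Suc] by (simp add: x_Suc)
  qed
  have "x (Suc n) \<le> x n / 2" for n
    unfolding x_Suc by (rule min.cobounded2)
  moreover have "x (Suc n) < g (T (x n))" for n
    using g_pos[of "T (x n)"] T[OF x_pos[of n]] by (simp add: x_Suc)
  ultimately show ?thesis
    using that[of x "\<lambda>n. T (x n)"] x_pos T by blast
qed

lemma insert_zero_decseq_subset_two_balls:
  fixes x \<tau> :: "nat \<Rightarrow> real"
  assumes "decseq x" and "\<And>n. 0 \<le> x n" and "r > 0"
    and small: "\<And>j. \<tau> j \<le> \<rho> \<Longrightarrow> x (Suc j) < r"
  shows "\<exists>P Q. insert 0 {x j | j. \<tau> j \<le> \<rho>} \<subseteq> ball P r \<union> ball Q r"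
proof (cases "\<exists>j. \<tau> j \<le> \<rho>")
  case False
  then show ?thesis
    using \<open>r > 0\<close> by (intro exI[of _ 0]) auto
next
  case True
  define J where "J = (LEAST j. \<tau> j \<le> \<rho>)"
  have J: "\<tau> J \<le> \<rho>"
    using True unfolding J_def by (metis LeastI)
  have "x j \<in> ball 0 r \<union> ball (x J) r" if "\<tau> j \<le> \<rho>" for j
  proof (cases "j = J")
    case False
    with that have "Suc J \<le> j"
      unfolding J_def by (metis Least_le le_neq_implies_less Suc_leI)
    then have "x j \<le> x (Suc J)"
      using \<open>decseq x\<close> by (simp add: decseq_def)
    then show ?thesis
      using small[OF J] assms(2)[of j] by (simp add: dist_real_def)
  qed (use \<open>r > 0\<close> in simp)
  moreover have "0 \<in> ball 0 r"
    using \<open>r > 0\<close> by simp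
  ultimately have "insert 0 {x j | j. \<tau> j \<le> \<rho>} \<subseteq> ball 0 r \<union> ball (x J) r"
    by blast
  then show ?thesis
    by blast
qed

lemma infinite_if_approximates_halving_seq:
  fixes x :: "nat \<Rightarrow> real" and A :: "real set"
  assumes pos: "\<And>n. 0 < x n" and halving: "\<And>n. x (Suc n) \<le> x n / 2"
    and approx: "\<And>j. \<exists>Q\<in>A. \<bar>Q - x j\<bar> < x j / 4"
  shows "infinite A"
proof -
  obtain h where h_in: "\<And>j. h j \<in> A" and h_close: "\<And>j. \<bar>h j - x j\<bar> < x j / 4"
    using approx by metis
  have "h m \<noteq> h n" if "m < n" for m n
    using halving_seq_le[of x, OF pos halving that] h_close[of m] h_close[of n] pos[of n] by linarith
  then have "inj h"
    by (metis injI linorder_neqE_nat)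
  then have "infinite (range h)"
    by (simp add: range_inj_infinite)
  then show ?thesis
    using h_in by (meson finite_subset image_subset_iff)
qed

theorem mainTheorem13:
  fixes \<epsilon> :: real and f g :: "real \<Rightarrow> real"
  assumes "\<epsilon> > 0"
    and "\<And>t. t > 0 \<Longrightarrow> f t > 0"
    and "\<And>t. t > 0 \<Longrightarrow> g t > 0"
    and "mono_on {0<..} g"
    and "(f \<longlongrightarrow> 0) (at_right 0)"
  shows "\<exists>S :: real \<Rightarrow> real set.
     (\<forall>\<tau> \<rho>. 0 < \<tau> \<and> \<tau> \<le> \<rho> \<longrightarrow> S \<tau> \<subseteq> S \<rho>) \<and>
     (\<forall>\<rho>>0. \<exists>P Q. S \<rho> \<subseteq> ball P (g \<rho>) \<union> ball Q (g \<rho>)) \<and>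
     (\<forall>A :: real set. (\<forall>\<rho>. 0 < \<rho> \<and> \<rho> \<le> \<epsilon> \<longrightarrow> (\<forall>P\<in>S \<rho>. \<exists>Q\<in>A. \<bar>Q - P\<bar> \<le> f \<rho>))
        \<longrightarrow> infinite A)"
proof (rule scales_and_halving_points_exist[OF assms(1,5,3)])
  fix x \<tau> :: "nat \<Rightarrow> real"
  assume x_pos: "\<And>n. 0 < x n" and x_halving: "\<And>n. x (Suc n) \<le> x n / 2"
    and \<tau>_pos: "\<And>n. 0 < \<tau> n" and \<tau>_le: "\<And>n. \<tau> n \<le> \<epsilon>"
    and f_\<tau>: "\<And>n. f (\<tau> n) < x n / 4" and x_Suc_less: "\<And>n. x (Suc n) < g (\<tau> n)"
  have x_decseq: "decseq x"
    using halving_seq_decseq[of x, OF x_pos x_halving] .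
  define S where "S \<rho> = insert 0 {x j | j. \<tau> j \<le> \<rho>}" for \<rho>
  have "S \<tau>' \<subseteq> S \<rho>" if "\<tau>' \<le> \<rho>" for \<tau>' \<rho>
    using that unfolding S_def by auto
  moreover have "\<exists>P Q. S \<rho> \<subseteq> ball P (g \<rho>) \<union> ball Q (g \<rho>)" if "\<rho> > 0" for \<rho>
  proof -
    have "x (Suc j) < g \<rho>" if "\<tau> j \<le> \<rho>" for j
    proof -
      have "g (\<tau> j) \<le> g \<rho>"
        by (rule mono_onD[OF assms(4)]) (use \<tau>_pos[of j] \<open>\<rho> > 0\<close> that in auto)
      then show ?thesis
        using x_Suc_less[of j] by linarith
    qed
    then show ?thesis
      unfolding S_def
      by (rule insert_zero_decseq_subset_two_balls[OF x_decseq less_imp_le[OF x_pos] assms(3)[OF that]])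
  qed
  moreover have "infinite A"
    if approx: "\<forall>\<rho>. 0 < \<rho> \<and> \<rho> \<le> \<epsilon> \<longrightarrow> (\<forall>P\<in>S \<rho>. \<exists>Q\<in>A. \<bar>Q - P\<bar> \<le> f \<rho>)" for A
  proof (rule infinite_if_approximates_halving_seq[of x, OF x_pos x_halving])
    fix j
    have "x j \<in> S (\<tau> j)"
      by (auto simp: S_def)
    then obtain Q where "Q \<in> A" and "\<bar>Q - x j\<bar> \<le> f (\<tau> j)"
      using approx \<tau>_pos[of j] \<tau>_le[of j] by blast
    then show "\<exists>Q\<in>A. \<bar>Q - x j\<bar> < x j / 4"
      using f_\<tau>[of j] by (meson le_less_trans)
  qed
  ultimately show ?thesis
    by (intro exI[of _ S]) auto
qed

end
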